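(* Consider the two-good panel bundle model described in the context and suppose Assumptions 1–3 hold. Then for any $(x_s,x_t,z)$ and any $s\neq t$: (1) for each $j\in\mathcal C$: if $P_s(\{j\}\mid x_s,x_t,z)>P_t(\{j\}\mid x_s,x_t,z)$, then there exists $k\in\mathcal C$, $k\neq j$, with $\Delta_{s,t}\delta_j>\Delta_{s,t}\delta_k$; (2) for each $\ell\in\{A,B\}$, with $\ell_{-1}$ the other good: if $P_s(\{\ell,AB\}\mid x_s,x_t,z)>P_t(\{\ell,AB\}\mid x_s,x_t,z)$, then either $\Delta_{s,t}\delta_\ell>0$, or both $\Delta_{s,t}(\delta_\ell+\operatorname{sign}(\Gamma(z))\delta_{\ell_{-1}})>0$ and $|\Gamma(z)|>-\Delta_{s,t}\delta_\ell$ (or both alternatives hold); (3) if $P_s(\{AB\}\mid x_s,x_t,z)+P_t(\{O\}\mid x_s,x_t,z)>1$, then $\Gamma(z)>-\min\{\Delta_{s,t}\delta_A,\Delta_{s,t}\delta_B\}$ and $\Delta_{s,t}(\delta_A+\delta_B)>0$; and if $P_s(\{A\}\mid x_s,x_t,z)+P_t(\{B\}\mid x_s,x_t,z)>1$, then $\Gamma(z)<\min\{\Delta_{s,t}\delta_A,-\Delta_{s,t}\delta_B\}$ and $\Delta_{s,t}(\delta_A-\delta_B)>0$.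
   Context: Panel multinomial choice model with bundles: consumers $i$, periods $t=1,\dots,T$ with $T\ge 2$ fixed; two goods $A,B$ and choice set $\mathcal C=\{A,B,AB,O\}$ ($A$ = only good $A$, $B$ = only good $B$, $AB$ = both goods, $O$ = outside option). Utilities: $u_{iAt}=X_{iAt}'\beta_0+\alpha_{iA}+\epsilon_{iAt}$, $u_{iBt}=X_{iBt}'\beta_0+\alpha_{iB}+\epsilon_{iBt}$, $u_{iABt}=u_{iAt}+u_{iBt}+\Gamma_{it}$, $u_{iOt}=0$, with $X_{ijt}\in\mathbb R^{d_x}$ observed, $\alpha_{ij}\in\mathbb R$ unobserved time-invariant fixed effects, $\epsilon_{ijt}\in\mathbb R$ unobserved shocks, $\beta_0\in\mathbb R^{d_x}$ unknown. The observed choice $Y_{it}\in\mathcal C$ maximizes utility; ties occur with probability zero. $X_{it}=(X_{iAt},X_{iBt})$, $\alpha_i=(\alpha_{iA},\alpha_{iB})$, $\epsilon_{it}=(\epsilon_{iAt},\epsilon_{iBt})$. Assumption 1: $\Gamma_{it}=\Gamma(Z_i)$, $Z_i\in\mathbb R^{d_z}$ observed and time-invariant, $\Gamma$ possibly unknown. Assumption 2: at least one component of $X_{it}$ is not in $Z_i$ and has nonzero coefficient. Assumption 3: for all $s,t\le T$, $\epsilon_{is}\mid(X_{is},X_{it},Z_i,\alpha_i)$ and $\epsilon_{it}\mid(X_{is},X_{it},Z_i,\alpha_i)$ have the same distribution. Notation: $P_t(K\mid x_s,x_t,z)=\Pr(Y_{it}\in K\mid X_{is}=x_s,X_{it}=x_t,Z_i=z)$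 for $K\subset\mathcal C$. Given $X_{i\ell t}=x_{\ell t}$: $\delta_{\ell t}=x_{\ell t}'\beta_0$ for $\ell\in\{A,B\}$, $\delta_{ABt}=\delta_{At}+\delta_{Bt}$, $\delta_{Ot}=0$, and $\Delta_{s,t}\delta_j=\delta_{js}-\delta_{jt}$. $\operatorname{sign}(x)=\mathbb 1\{x>0\}-\mathbb 1\{x<0\}$. *)

theory Defs
  imports "HOL-Probability.Probability"
begin

datatype alt = GA | GB | GAB | GO

fun delta :: "alt \<Rightarrow> real \<Rightarrow> real \<Rightarrow> real" where
  "delta GA dA dB = dA"
| "delta GB dA dB = dB"
| "delta GAB dA dB = dA + dB"
| "delta GO dA dB = 0"

text \<open>Utility of alternative j in a period, given delta_A, delta_B, the fixed effects
  (aA,aB), the shocks (eA,eB) and the bundle term g = Gamma(z).\<close>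
fun util :: "alt \<Rightarrow> real \<Rightarrow> real \<Rightarrow> real \<times> real \<Rightarrow> real \<times> real \<Rightarrow> real \<Rightarrow> real" where
  "util GA dA dB a e g = dA + fst a + fst e"
| "util GB dA dB a e g = dB + snd a + snd e"
| "util GAB dA dB a e g = (dA + fst a + fst e) + (dB + snd a + snd e) + g"
| "util GO dA dB a e g = 0"

fun other_good :: "alt \<Rightarrow> alt" where
  "other_good GA = GB"
| "other_good GB = GA"
| "other_good j = j"

end

theory Submission
  imports Defs
begin

text \<open>By Assumption 3 the pairs \<open>(\<alpha>, \<epsilon>\<^sub>s)\<close> and \<open>(\<alpha>, \<epsilon>\<^sub>t)\<close> have one common law \<open>\<mu>\<close>.
  Since ties have probability zero, the probability of choosing from \<open>K\<close> in period \<open>p\<close> is the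
  \<open>\<mu>\<close>-measure of the region of \<open>(\<alpha>, \<epsilon>)\<close> where the utility maximiser lies in \<open>K\<close>, and only
  period \<open>p\<close>'s mean utilities enter this region. Every claim is then the contrapositive of a
  deterministic fact: if the stated inequality on \<open>\<Delta>\<delta>\<close> fails, the period-\<open>s\<close> region is
  contained in the period-\<open>t\<close> region (parts 1 and 2), or the two regions are disjoint (part 3).\<close>

definition choice_region :: "alt set \<Rightarrow> real \<Rightarrow> real \<Rightarrow> real \<Rightarrow> ((real \<times> real) \<times> (real \<times> real)) set"
  where "choice_region K dA dB g =
    {(a, e). \<forall>k. k \<notin> K \<longrightarrow> (\<exists>j\<in>K. util k dA dB a e g < util j dA dB a e g)}"

lemma UNIV_alt: "(UNIV :: alt set) = {GA, GB, GAB, GO}"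
  using alt.exhaust by auto

lemma all_alt: "(\<forall>k::alt. P k) \<longleftrightarrow> P GA \<and> P GB \<and> P GAB \<and> P GO"
  by (metis alt.exhaust)

lemma finite_alt_set [simp]: "finite (K :: alt set)"
  using finite_subset[OF subset_UNIV] UNIV_alt by (metis finite.emptyI finite.insertI)

lemma util_diff_eq_delta_diff:
  "util j dA dB a e g - util j dA' dB' a e g = delta j dA dB - delta j dA' dB'"
  by (cases j) auto

lemma continuous_on_util: "continuous_on UNIV (\<lambda>p. util j dA dB (fst p) (snd p) g)"
  by (cases j) (simp_all add: continuous_intros)

lemma open_choice_region: "open (choice_region K dA dB g)"
proof -
  have "choice_region K dA dB g =
      (\<Inter>k\<in>-K. \<Union>j\<in>K. {p. util k dA dB (fst p) (snd p) g < util j dA dB (fst p) (snd p) g})"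
    unfolding choice_region_def by auto
  then show ?thesis
    by (simp add: open_INT open_UN open_Collect_less continuous_on_util)
qed

lemma mem_choice_region_iff:
  assumes "\<forall>k. k \<noteq> y \<longrightarrow> util k dA dB a e g < util y dA dB a e g"
  shows "(a, e) \<in> choice_region K dA dB g \<longleftrightarrow> y \<in> K"
  using assms unfolding choice_region_def by (force dest: order.asym)

lemma measure_choice_eq_measure_region:
  fixes Y :: "'w \<Rightarrow> alt" and alpha eps :: "'w \<Rightarrow> real \<times> real"
  assumes "alpha \<in> borel_measurable M" "eps \<in> borel_measurable M"
    and "Y \<in> measurable M (count_space UNIV)"
    and "AE \<omega> in M. \<forall>k. k \<noteq> Y \<omega> \<longrightarrow>
      util k dA dB (alpha \<omega>) (eps \<omega>) g < util (Y \<omega>) dA dB (alpha \<omega>) (eps \<omega>) g"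
  shows "measure M {\<omega> \<in> space M. Y \<omega> \<in> K} =
    measure (distr M borel (\<lambda>\<omega>. (alpha \<omega>, eps \<omega>))) (choice_region K dA dB g)"
proof -
  have X: "(\<lambda>\<omega>. (alpha \<omega>, eps \<omega>)) \<in> borel_measurable M"
    using assms(1,2) by measurable
  have "measure M {\<omega> \<in> space M. Y \<omega> \<in> K} =
      measure M ((\<lambda>\<omega>. (alpha \<omega>, eps \<omega>)) -` choice_region K dA dB g \<inter> space M)"
  proof (rule measure_eq_AE)
    show "AE \<omega> in M. \<omega> \<in> {\<omega> \<in> space M. Y \<omega> \<in> K} \<longleftrightarrow>
        \<omega> \<in> (\<lambda>\<omega>. (alpha \<omega>, eps \<omega>)) -` choice_region K dA dB g \<inter> space M"
      using assms(4) by (rule eventually_mono) (auto simp: mem_choice_region_iff)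
    show "{\<omega> \<in> space M. Y \<omega> \<in> K} \<in> sets M"
      using measurable_sets[OF assms(3), of K] by (simp add: vimage_def Int_def conj_commute)
    show "(\<lambda>\<omega>. (alpha \<omega>, eps \<omega>)) -` choice_region K dA dB g \<inter> space M \<in> sets M"
      using X by (simp add: measurable_sets borel_open open_choice_region)
  qed
  also have "\<dots> = measure (distr M borel (\<lambda>\<omega>. (alpha \<omega>, eps \<omega>))) (choice_region K dA dB g)"
    using X by (simp add: measure_distr borel_open open_choice_region)
  finally show ?thesis .
qed

lemma choice_region_singleton_mono:
  assumes "\<forall>k. k \<noteq> j \<longrightarrow> delta j dAs dBs - delta j dAt dBt \<le> delta k dAs dBs - delta k dAt dBt"
  shows "choice_region {j} dAs dBs g \<subseteq> choice_region {j} dAt dBt g"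
proof (clarsimp simp: choice_region_def)
  fix a e k
  assume "\<forall>k. k \<noteq> j \<longrightarrow> util k dAs dBs a e g < util j dAs dBs a e g" and "k \<noteq> j"
  then have "util k dAs dBs a e g < util j dAs dBs a e g" by blast
  moreover have "delta j dAs dBs - delta j dAt dBt \<le> delta k dAs dBs - delta k dAt dBt"
    using assms \<open>k \<noteq> j\<close> by blast
  ultimately show "util k dAt dBt a e g < util j dAt dBt a e g"
    using util_diff_eq_delta_diff[of j dAs dBs a e g dAt dBt]
      util_diff_eq_delta_diff[of k dAs dBs a e g dAt dBt] by linarith
qed

lemma choice_region_good_or_bundle_mono:
  assumes "l \<in> {GA, GB}"
    and "\<not> (delta l dAs dBs - delta l dAt dBt > 0 \<or>
      (delta l dAs dBs - delta l dAt dBt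
         + sgn g * (delta (other_good l) dAs dBs - delta (other_good l) dAt dBt) > 0
       \<and> \<bar>g\<bar> > - (delta l dAs dBs - delta l dAt dBt)))"
  shows "choice_region {l, GAB} dAs dBs g \<subseteq> choice_region {l, GAB} dAt dBt g"
  using assms unfolding choice_region_def all_alt
  by (auto simp: sgn_if split: if_splits; smt (verit))

lemma choice_region_bundle_outside_option_disjoint:
  assumes "\<not> (g > - min (dAs - dAt) (dBs - dBt) \<and> (dAs - dAt) + (dBs - dBt) > 0)"
  shows "choice_region {GAB} dAs dBs g \<inter> choice_region {GO} dAt dBt g = {}"
  using assms unfolding choice_region_def all_alt
  by (auto simp: min_def split: if_splits; smt (verit))

lemma choice_region_A_B_disjoint:
  assumes "\<not> (g < min (dAs - dAt) (- (dBs - dBt)) \<and> (dAs - dAt) - (dBs - dBt) > 0)"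
  shows "choice_region {GA} dAs dBs g \<inter> choice_region {GB} dAt dBt g = {}"
  using assms unfolding choice_region_def all_alt
  by (auto simp: min_def split: if_splits; smt (verit))

lemma (in prob_space) prob_disjoint_add_le_1:
  assumes "A \<in> events" "B \<in> events" "A \<inter> B = {}"
  shows "prob A + prob B \<le> 1"
  using finite_measure_Union[OF assms] prob_le_1[of "A \<union> B"] by simp

theorem proposition2:
  fixes M :: "'w measure"
    and T s t :: nat
    and beta0 xAs xBs xAt xBt :: "real ^ 'd"
    and Gamma :: "'z \<Rightarrow> real" and z :: 'z
    and alpha eps_s eps_t :: "'w \<Rightarrow> real \<times> real"
    and Y_s Y_t :: "'w \<Rightarrow> alt"
  defines "dAs \<equiv> xAs \<bullet> beta0" and "dBs \<equiv> xBs \<bullet> beta0"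
      and "dAt \<equiv> xAt \<bullet> beta0" and "dBt \<equiv> xBt \<bullet> beta0"
  defines "Dd \<equiv> (\<lambda>j. delta j dAs dBs - delta j dAt dBt)"
  defines "Ps \<equiv> (\<lambda>K. measure M {\<omega> \<in> space M. Y_s \<omega> \<in> K})"
      and "Pt \<equiv> (\<lambda>K. measure M {\<omega> \<in> space M. Y_t \<omega> \<in> K})"
  assumes T: "T \<ge> 2" and st: "s \<in> {1..T}" "t \<in> {1..T}" "s \<noteq> t"
    and M: "prob_space M"
    and rv: "alpha \<in> borel_measurable M" "eps_s \<in> borel_measurable M" "eps_t \<in> borel_measurable M"
    and Ymeas: "Y_s \<in> measurable M (count_space UNIV)" "Y_t \<in> measurable M (count_space UNIV)"
    \<comment> \<open>utility maximisation, ties with probability zero (Assumption 1: Gamma_it = Gamma(z))\<close>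
    and Ys_max: "AE \<omega> in M. \<forall>k. k \<noteq> Y_s \<omega> \<longrightarrow>
        util k dAs dBs (alpha \<omega>) (eps_s \<omega>) (Gamma z) < util (Y_s \<omega>) dAs dBs (alpha \<omega>) (eps_s \<omega>) (Gamma z)"
    and Yt_max: "AE \<omega> in M. \<forall>k. k \<noteq> Y_t \<omega> \<longrightarrow>
        util k dAt dBt (alpha \<omega>) (eps_t \<omega>) (Gamma z) < util (Y_t \<omega>) dAt dBt (alpha \<omega>) (eps_t \<omega>) (Gamma z)"
    \<comment> \<open>Assumption 3 (conditional on X_s = x_s, X_t = x_t, Z = z)\<close>
    and A3: "distr M borel (\<lambda>\<omega>. (alpha \<omega>, eps_s \<omega>)) = distr M borel (\<lambda>\<omega>. (alpha \<omega>, eps_t \<omega>))"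
  shows
    "(\<forall>j. Ps {j} > Pt {j} \<longrightarrow> (\<exists>k. k \<noteq> j \<and> Dd j > Dd k))
     \<and> (\<forall>l \<in> {GA, GB}. Ps {l, GAB} > Pt {l, GAB} \<longrightarrow>
          (Dd l > 0 \<or> (Dd l + sgn (Gamma z) * Dd (other_good l) > 0 \<and> \<bar>Gamma z\<bar> > - Dd l)))
     \<and> (Ps {GAB} + Pt {GO} > 1 \<longrightarrow> Gamma z > - min (Dd GA) (Dd GB) \<and> Dd GA + Dd GB > 0)
     \<and> (Ps {GA} + Pt {GB} > 1 \<longrightarrow> Gamma z < min (Dd GA) (- Dd GB) \<and> Dd GA - Dd GB > 0)"
proof -
  define \<mu> where "\<mu> = distr M borel (\<lambda>\<omega>. (alpha \<omega>, eps_s \<omega>))"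
  have "prob_space \<mu>"
    unfolding \<mu>_def using rv by (intro prob_space.prob_space_distr[OF M]) measurable
  then interpret \<mu>: prob_space \<mu> .
  have region_event: "choice_region K dA dB g \<in> \<mu>.events" for K dA dB g
    by (simp add: \<mu>_def borel_open open_choice_region)
  have Ps: "Ps K = \<mu>.prob (choice_region K dAs dBs (Gamma z))" for K
    unfolding Ps_def \<mu>_def using rv(1,2) Ymeas(1) Ys_max by (rule measure_choice_eq_measure_region)
  have Pt: "Pt K = \<mu>.prob (choice_region K dAt dBt (Gamma z))" for K
    unfolding Pt_def \<mu>_def A3 using rv(1,3) Ymeas(2) Yt_max by (rule measure_choice_eq_measure_region)
  have Ps_le_Pt: "Ps K \<le> Pt K"
    if "choice_region K dAs dBs (Gamma z) \<subseteq> choice_region K dAt dBt (Gamma z)" for K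
    using \<mu>.finite_measure_mono[OF that region_event] by (simp add: Ps Pt)
  have Ps_Pt_le_1: "Ps K1 + Pt K2 \<le> 1"
    if "choice_region K1 dAs dBs (Gamma z) \<inter> choice_region K2 dAt dBt (Gamma z) = {}" for K1 K2
    using \<mu>.prob_disjoint_add_le_1[OF region_event region_event that] by (simp add: Ps Pt)
  show ?thesis
  proof (intro conjI ballI allI impI)
    show "\<exists>k. k \<noteq> j \<and> Dd j > Dd k" if "Ps {j} > Pt {j}" for j
    proof (rule ccontr)
      assume "\<nexists>k. k \<noteq> j \<and> Dd j > Dd k"
      then have "Ps {j} \<le> Pt {j}"
        by (intro Ps_le_Pt choice_region_singleton_mono) (auto simp: Dd_def not_less)
      with that show False by simp
    qed
    show "Dd l > 0 \<or> (Dd l + sgn (Gamma z) * Dd (other_good l) > 0 \<and> \<bar>Gamma z\<bar> > - Dd l)"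
      if "l \<in> {GA, GB}" "Ps {l, GAB} > Pt {l, GAB}" for l
      using that Ps_le_Pt[OF choice_region_good_or_bundle_mono] unfolding Dd_def by (meson not_le)
    show "Gamma z > - min (Dd GA) (Dd GB)" "Dd GA + Dd GB > 0" if "Ps {GAB} + Pt {GO} > 1"
      using that Ps_Pt_le_1[OF choice_region_bundle_outside_option_disjoint] unfolding Dd_def delta.simps
      by (meson not_le)+
    show "Gamma z < min (Dd GA) (- Dd GB)" "Dd GA - Dd GB > 0" if "Ps {GA} + Pt {GB} > 1"
      using that Ps_Pt_le_1[OF choice_region_A_B_disjoint] unfolding Dd_def delta.simps
      by (meson not_le)+
  qed
qed

end
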